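(* Let $f\in G$ have $f'(0)=-1$. Then (i) either $f$ is an involution (i.e. $f\circ f=\mathrm{id}$) or $R_f(G)=R_{f^2}(G)$; and (ii) $f\in R(G)$ if and only if $f^2\in R(G)$.
   Context: $G$ denotes the group (under composition) of biholomorphic germs at $0$ in one complex variable: germs of functions holomorphic near $0$ with $f(0)=0$ and $f'(0)\neq 0$. For $f\in G$, $R_f(G)$ is the set of $g\in G$ with $g^{-1}\circ f\circ g=f^{-1}$, and $R(G)$ is the set of $f\in G$ with $R_f(G)\neq\emptyset$. *)

theory Defs
  imports "HOL-Complex_Analysis.Complex_Analysis"
begin

text \<open>Germs at 0 are represented by functions; two functions define the same germ
  iff they agree on a neighbourhood of 0.\<close>
definition germ_eq :: "(complex \<Rightarrow> complex) \<Rightarrow> (complex \<Rightarrow> complex) \<Rightarrow> bool" where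
  "germ_eq f g \<longleftrightarrow> eventually (\<lambda>z. f z = g z) (nhds 0)"

definition inG :: "(complex \<Rightarrow> complex) \<Rightarrow> bool" where
  "inG f \<longleftrightarrow> f analytic_on {0} \<and> f 0 = 0 \<and> deriv f 0 \<noteq> 0"

definition germ_inv :: "(complex \<Rightarrow> complex) \<Rightarrow> (complex \<Rightarrow> complex) \<Rightarrow> bool" where
  "germ_inv f h \<longleftrightarrow> inG h \<and> germ_eq (h \<circ> f) id \<and> germ_eq (f \<circ> h) id"

definition Rf :: "(complex \<Rightarrow> complex) \<Rightarrow> (complex \<Rightarrow> complex) set" where
  "Rf f = {g. inG g \<and> (\<exists>gi fi. germ_inv g gi \<and> germ_inv f fi \<and> germ_eq (gi \<circ> f \<circ> g) fi)}"

definition RG :: "(complex \<Rightarrow> complex) set" where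
  "RG = {f. inG f \<and> Rf f \<noteq> {}}"

end

theory Submission
  imports Defs
begin

text \<open>
  A germ in G is determined by its Taylor series, and composition of germs becomes composition
  of formal power series, so everything reduces to series without constant term. The key fact is
  that compositional square roots with multiplier -1 are unique: if a o a = b o b is not the
  identity and a'(0) = b'(0) = -1, then a = b. Write b = a + d with d of order k >= 2 and
  h = a o a = X + c with c of order m >= 2. The coefficient of degree k in b o b = a o a shows
  that k is even. Since h commutes with a and b, d o h = h o b - h o a, and a first order Taylor
  expansion of both sides in degree k + m - 1 yields k = (-1)^(m-1) m, impossible for even k.

  Now if g^-1 f^2 g = f^-2, then g^-1 f g and f^-1 are square roots of f^-2 with multiplier -1,
  hence equal unless f is an involution; so R_f(G) = R_(f^2)(G).
\<close>

lemma fps_X_power_dvd_iff: "fps_X ^ n dvd (f :: 'a::comm_ring_1 fps) \<longleftrightarrow> (\<forall>i<n. f $ i = 0)"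
proof
  assume "fps_X ^ n dvd f"
  then obtain g where "f = fps_X ^ n * g" by (elim dvdE)
  then show "\<forall>i<n. f $ i = 0" by (simp add: fps_X_power_mult_nth)
next
  assume "\<forall>i<n. f $ i = 0"
  then have "f = fps_X ^ n * fps_shift n f"
    by (intro fps_ext) (auto simp: fps_X_power_mult_nth)
  then show "fps_X ^ n dvd f" by (rule dvdI)
qed

lemma fps_X_power_dvd_nth: "fps_X ^ n dvd (f :: 'a::comm_ring_1 fps) \<Longrightarrow> i < n \<Longrightarrow> f $ i = 0"
  by (simp add: fps_X_power_dvd_iff)

lemma fps_X_dvd_iff: "fps_X dvd (f :: 'a::comm_ring_1 fps) \<longleftrightarrow> f $ 0 = 0"
  using fps_X_power_dvd_iff[of 1 f] by simp

lemma fps_X_power_subdegree_dvd: "fps_X ^ subdegree f dvd (f :: 'a::comm_ring_1 fps)"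
  by (simp add: fps_X_power_dvd_iff nth_less_subdegree_zero)

lemma fps_X_power_dvd_deriv:
  "fps_X ^ n dvd f \<Longrightarrow> fps_X ^ (n - 1) dvd fps_deriv (f :: 'a::comm_ring_1 fps)"
  unfolding fps_X_power_dvd_iff by (simp add: less_diff_conv)

lemma fps_mult_nth_add_of_X_power_dvd:
  fixes f g :: "'a::comm_ring_1 fps"
  assumes "fps_X ^ a dvd f" "fps_X ^ b dvd g"
  shows "(f * g) $ (a + b) = f $ a * g $ b"
proof -
  obtain f' g' where f: "f = fps_X ^ a * f'" and g: "g = fps_X ^ b * g'"
    using assms by (elim dvdE)
  have "f * g = fps_X ^ (a + b) * (f' * g')" by (simp add: f g power_add algebra_simps)
  then show ?thesis by (simp add: f g fps_X_power_mult_nth)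
qed

lemma fps_X_power_dvd_compose:
  fixes f g :: "'a::idom fps"
  assumes "fps_X ^ n dvd f" "g $ 0 = 0"
  shows "fps_X ^ n dvd (f oo g)"
proof -
  obtain h where f: "f = fps_X ^ n * h" using assms(1) by (elim dvdE)
  have "fps_X dvd g" using assms(2) by (simp add: fps_X_dvd_iff)
  then have "fps_X ^ n dvd g ^ n" by (rule dvd_power_same)
  then show ?thesis by (simp add: f fps_compose_mult_distrib fps_X_power_compose assms(2))
qed

lemma fps_compose_nth_of_X_power_dvd:
  fixes f g :: "'a::idom fps"
  assumes "fps_X ^ k dvd f" "g $ 0 = 0"
  shows "(f oo g) $ k = f $ k * (g $ 1) ^ k"
proof -
  obtain h where f: "f = fps_X ^ k * h" using assms(1) by (elim dvdE)
  have "fps_X ^ k dvd g ^ k"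
    using assms(2) by (simp add: fps_X_dvd_iff dvd_power_same)
  then have "(g ^ k * (h oo g)) $ (k + 0) = (g ^ k) $ k * (h oo g) $ 0"
    by (intro fps_mult_nth_add_of_X_power_dvd) simp_all
  then show ?thesis
    by (simp add: f fps_compose_mult_distrib fps_X_power_compose assms(2)
        startsby_zero_power_nth_same fps_X_power_mult_nth)
qed

lemma fps_compose_nth_1: "g $ 0 = 0 \<Longrightarrow> (f oo g) $ 1 = f $ 1 * g $ 1"
  by (simp add: fps_compose_nth)

lemma power_binomial_remainder_step:
  fixes x y :: "'a::comm_ring_1"
  shows "(x + y) ^ Suc i - x ^ Suc i - of_nat (Suc i) * x ^ i * y =
      (x + y) * ((x + y) ^ i - x ^ i - of_nat i * x ^ (i - 1) * y) + of_nat i * x ^ (i - 1) * y ^ 2"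
proof (cases i)
  case (Suc j)
  show ?thesis
    unfolding Suc power_Suc[of _ "Suc j"] power_Suc[of x j] diff_Suc_1 power2_eq_square of_nat_Suc
    by (simp add: algebra_simps del: power_Suc)
qed simp

lemma fps_X_power_dvd_binomial_remainder:
  fixes G E :: "'a::comm_ring_1 fps"
  assumes G: "fps_X dvd G" and E: "fps_X ^ e dvd E" and e: "1 \<le> e"
  shows "fps_X ^ (i + 2 * e - 2) dvd (G + E) ^ i - G ^ i - of_nat i * G ^ (i - 1) * E"
proof (induction i)
  case (Suc i)
  have "fps_X dvd E" using E e by (metis dvd_power dvd_trans not_one_le_zero neq0_conv)
  then have "fps_X * fps_X ^ (i + 2 * e - 2) dvd
      (G + E) * ((G + E) ^ i - G ^ i - of_nat i * G ^ (i - 1) * E)"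
    using G Suc.IH by (intro mult_dvd_mono dvd_add)
  moreover have "fps_X ^ (Suc i + 2 * e - 2) dvd of_nat i * G ^ (i - 1) * E ^ 2"
  proof (cases i)
    case (Suc j)
    have "fps_X ^ j * (fps_X ^ e) ^ 2 dvd G ^ j * E ^ 2"
      using G E by (intro mult_dvd_mono dvd_power_same)
    moreover have "fps_X ^ (Suc i + 2 * e - 2) dvd fps_X ^ j * (fps_X ^ e) ^ 2"
      unfolding power_add[symmetric] power_mult[symmetric]
      by (rule le_imp_power_dvd) (use Suc e in linarith)
    ultimately have "fps_X ^ (Suc i + 2 * e - 2) dvd G ^ j * E ^ 2" by (rule dvd_trans[rotated])
    then show ?thesis using Suc by (simp add: mult.assoc dvd_mult)
  qed simp
  moreover have "fps_X * fps_X ^ (i + 2 * e - 2) = fps_X ^ (Suc i + 2 * e - 2)"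
    using e by (simp flip: power_Suc)
  ultimately show ?case
    unfolding diff_Suc_1 power_binomial_remainder_step by (metis dvd_add)
qed simp

text \<open>
  Split \<open>F\<close> into its terms of degree below \<open>N\<close> and a tail of order \<open>N\<close>: the tail is harmless,
  and each monomial is handled by the binomial estimate above.
\<close>
lemma fps_compose_first_order_remainder:
  fixes F G E :: "'a::idom fps"
  assumes F: "fps_X ^ f dvd F" and G: "G $ 0 = 0" and E: "fps_X ^ e dvd E" and e: "1 \<le> e"
  shows "fps_X ^ (f + 2 * e - 2) dvd (F oo (G + E)) - (F oo G) - (fps_deriv F oo G) * E"
proof -
  define N where "N = f + 2 * e - 2"
  define R where "R P = (P oo (G + E)) - (P oo G) - (fps_deriv P oo G) * E" for P
  have R_add: "R (P + Q) = R P + R Q" for P Q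
    by (simp add: R_def fps_compose_add_distrib algebra_simps)
  have R_sum: "R (sum P S) = (\<Sum>i\<in>S. R (P i))" for P and S :: "nat set"
    by (induction S rule: infinite_finite_induct) (simp_all add: R_add, simp_all add: R_def)
  have XG: "fps_X dvd G" and GE: "(G + E) $ 0 = 0"
    using G E e by (auto simp: fps_X_dvd_iff fps_X_power_dvd_iff)
  define T where "T = (\<Sum>i\<in>{f..<N}. fps_const (F $ i) * fps_X ^ i)"
  define W where "W = F - T"
  have W: "fps_X ^ N dvd W"
    using F by (auto simp: fps_X_power_dvd_iff W_def T_def fps_sum_nth if_distrib cong: if_cong)
  have "fps_X ^ (N - 1) * fps_X ^ e dvd (fps_deriv W oo G) * E"
    using W E G by (intro mult_dvd_mono fps_X_power_dvd_compose fps_X_power_dvd_deriv)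
  moreover have "fps_X ^ N dvd fps_X ^ (N - 1) * fps_X ^ e"
    unfolding power_add[symmetric] by (rule le_imp_power_dvd) (use e in linarith)
  ultimately have "fps_X ^ N dvd (fps_deriv W oo G) * E" by (rule dvd_trans[rotated])
  then have "fps_X ^ N dvd R W"
    using W G GE by (simp add: R_def dvd_diff fps_X_power_dvd_compose)
  moreover have "fps_X ^ N dvd R T"
    unfolding T_def R_sum
  proof (rule dvd_sum)
    fix i assume i: "i \<in> {f..<N}"
    have "R (fps_const (F $ i) * fps_X ^ i) =
        fps_const (F $ i) * ((G + E) ^ i - G ^ i - of_nat i * G ^ (i - 1) * E)"
      using G GE by (simp add: R_def fps_compose_mult_distrib fps_X_power_compose fps_deriv_power
          algebra_simps fps_of_nat flip: fps_const_mult)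
    moreover have "fps_X ^ N dvd fps_X ^ (i + 2 * e - 2)"
      using i by (intro le_imp_power_dvd) (use e in \<open>auto simp: N_def\<close>)
    ultimately show "fps_X ^ N dvd R (fps_const (F $ i) * fps_X ^ i)"
      using fps_X_power_dvd_binomial_remainder[OF XG E e, of i] by (auto intro: dvd_trans dvd_mult)
  qed
  ultimately have "fps_X ^ N dvd R F"
    using R_add[of T W] by (simp add: W_def dvd_add)
  then show ?thesis by (simp add: R_def N_def)
qed

lemma fps_compose_perturbed_self_nth:
  fixes A D :: "'a::idom fps"
  assumes A0: "A $ 0 = 0" and D: "fps_X ^ k dvd D" and k: "2 \<le> k"
  shows "((A + D) oo (A + D)) $ k = (A oo A) $ k + D $ k * ((A $ 1) ^ k + A $ 1)"
proof -
  have D01: "D $ 0 = 0" "D $ 1 = 0" using D k by (auto simp: fps_X_power_dvd_iff)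
  have "fps_X ^ (1 + 2 * k - 2) dvd (A oo (A + D)) - (A oo A) - (fps_deriv A oo A) * D"
    using A0 D k
    by (intro fps_compose_first_order_remainder) (auto simp: fps_X_dvd_iff fps_X_power_dvd_iff)
  then have "((A oo (A + D)) - (A oo A) - (fps_deriv A oo A) * D) $ k = 0"
    by (rule fps_X_power_dvd_nth) (use k in linarith)
  then have "(A oo (A + D)) $ k = (A oo A) $ k + ((fps_deriv A oo A) * D) $ (0 + k)"
    by (simp add: algebra_simps)
  also have "((fps_deriv A oo A) * D) $ (0 + k) = A $ 1 * D $ k"
    using D by (subst fps_mult_nth_add_of_X_power_dvd) simp_all
  finally have "(A oo (A + D)) $ k = (A oo A) $ k + A $ 1 * D $ k" .
  moreover have "(D oo (A + D)) $ k = D $ k * (A $ 1) ^ k"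
    using D A0 D01 by (simp add: fps_compose_nth_of_X_power_dvd)
  ultimately show ?thesis
    by (simp add: fps_compose_add_distrib algebra_simps)
qed

lemma fps_compose_perturbation_diff_nth:
  fixes A C D :: "'a::idom fps"
  assumes A0: "A $ 0 = 0" and D: "fps_X ^ k dvd D" and C: "fps_X ^ m dvd C"
    and k: "2 \<le> k" and m: "1 \<le> m"
  shows "((C oo (A + D)) - (C oo A)) $ (k + m - 1) = of_nat m * C $ m * (A $ 1) ^ (m - 1) * D $ k"
proof -
  have "fps_X ^ (m + 2 * k - 2) dvd (C oo (A + D)) - (C oo A) - (fps_deriv C oo A) * D"
    using A0 C D k by (intro fps_compose_first_order_remainder) auto
  then have "((C oo (A + D)) - (C oo A) - (fps_deriv C oo A) * D) $ (k + m - 1) = 0"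
    by (rule fps_X_power_dvd_nth) (use k m in linarith)
  then have "((C oo (A + D)) - (C oo A)) $ (k + m - 1) = ((fps_deriv C oo A) * D) $ ((m - 1) + k)"
    using m by (simp add: algebra_simps)
  also have "\<dots> = (fps_deriv C oo A) $ (m - 1) * D $ k"
    using A0 C D
    by (intro fps_mult_nth_add_of_X_power_dvd fps_X_power_dvd_compose fps_X_power_dvd_deriv)
  also have "(fps_deriv C oo A) $ (m - 1) = fps_deriv C $ (m - 1) * (A $ 1) ^ (m - 1)"
    using A0 C by (intro fps_compose_nth_of_X_power_dvd fps_X_power_dvd_deriv)
  also have "fps_deriv C $ (m - 1) = of_nat m * C $ m"
    using m by simp
  finally show ?thesis .
qed

theorem fps_compose_square_root_unique:
  fixes A B :: "'a::{idom, ring_char_0} fps"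
  assumes A0: "A $ 0 = 0" and B0: "B $ 0 = 0" and A1: "A $ 1 = -1" and B1: "B $ 1 = -1"
    and AB: "A oo A = B oo B" and not_X: "A oo A \<noteq> fps_X"
  shows "A = B"
proof (rule ccontr)
  assume "A \<noteq> B"
  define D k where "D = B - A" and "k = subdegree D"
  have "D \<noteq> 0" using \<open>A \<noteq> B\<close> by (simp add: D_def)
  have D: "fps_X ^ k dvd D" by (simp add: k_def fps_X_power_subdegree_dvd)
  have k: "2 \<le> k"
    unfolding k_def using \<open>D \<noteq> 0\<close> A0 B0 A1 B1
    by (intro subdegree_geI) (auto simp: D_def less_2_cases_iff)
  have d: "D $ k \<noteq> 0" using \<open>D \<noteq> 0\<close> by (simp add: k_def)
  have B_eq: "B = A + D" by (simp add: D_def)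
  have "even k"
  proof -
    have "(B oo B) $ k = (A oo A) $ k + D $ k * ((-1) ^ k - 1)"
      using fps_compose_perturbed_self_nth[OF A0 D k] A1 by (simp add: B_eq)
    then have "(-1 :: 'a) ^ k = 1" using AB d by simp
    then show ?thesis by (metis neg_one_odd_power one_neq_neg_one)
  qed
  define H C m where "H = A oo A" and "C = H - fps_X" and "m = subdegree C"
  have "C \<noteq> 0" using not_X by (simp add: C_def H_def)
  have C: "fps_X ^ m dvd C" by (simp add: m_def fps_X_power_subdegree_dvd)
  have "H $ 1 = 1" using fps_compose_nth_1[OF A0, of A] A1 by (simp add: H_def)
  then have m: "2 \<le> m"
    unfolding m_def using \<open>C \<noteq> 0\<close> A0
    by (intro subdegree_geI) (auto simp: C_def H_def less_2_cases_iff)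
  have c: "C $ m \<noteq> 0" using \<open>C \<noteq> 0\<close> by (simp add: m_def)
  have "B oo H = H oo B" by (simp add: H_def AB B0 fps_compose_assoc)
  moreover have "A oo H = H oo A" by (simp add: H_def A0 fps_compose_assoc)
  ultimately have "D oo H = (H oo B) - (H oo A)"
    by (simp add: D_def fps_compose_sub_distrib)
  also have "\<dots> = D + ((C oo (A + D)) - (C oo A))"
    using A0 B0 by (simp add: C_def B_eq fps_compose_add_distrib fps_compose_sub_distrib)
  finally have "(D oo (fps_X + C)) - (D oo fps_X) = (C oo (A + D)) - (C oo A)"
    by (simp add: C_def)
  then have "of_nat k * D $ k * 1 ^ (k - 1) * C $ m = of_nat m * C $ m * (-1) ^ (m - 1) * D $ k"
    using fps_compose_perturbation_diff_nth[OF _ C D m, of fps_X] k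
      fps_compose_perturbation_diff_nth[OF A0 D C k] m A1 by (simp add: add.commute)
  then have km: "(of_nat k :: 'a) = of_nat m * (-1) ^ (m - 1)"
    using c d by simp
  show False
  proof (cases "even (m - 1)")
    case True
    then have "k = m" using km by simp
    then show False using \<open>even k\<close> True m by simp
  next
    case False
    then have "(of_nat (k + m) :: 'a) = 0" using km by simp
    then show False using k by (simp only: of_nat_eq_0_iff)
  qed
qed

lemma fps_compose_cancel_right:
  fixes A B Z :: "'a::idom fps"
  assumes "A oo B = fps_X" "A $ 0 = 0" "B $ 0 = 0"
  shows "Z oo A oo B = Z"
  using fps_compose_assoc[OF assms(3,2), of Z] assms(1) by simp

lemma fps_compose_left_inverse_eq_right_inverse:
  fixes U F V :: "'a::idom fps"
  assumes "U oo F = fps_X" "F oo V = fps_X" "F $ 0 = 0" "V $ 0 = 0"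
  shows "U = V"
proof -
  have "U = U oo (F oo V)" using assms(2) by simp
  also have "\<dots> = (U oo F) oo V" by (rule fps_compose_assoc[OF assms(4,3)])
  also have "\<dots> = V" using assms(1,4) by simp
  finally show ?thesis .
qed

lemma fps_compose_eq_X_nth_1:
  fixes A F :: "'a::idom fps"
  assumes "A oo F = fps_X" "F $ 0 = 0"
  shows "A $ 1 * F $ 1 = 1"
proof -
  have "A $ 1 * F $ 1 = (A oo F) $ 1" by (rule fps_compose_nth_1[OF assms(2), symmetric])
  then show ?thesis by (simp add: assms(1))
qed

lemma fps_compose_conjugate_inverse_of_square:
  fixes F G GI FI :: "'a::{idom, ring_char_0} fps"
  assumes zero: "F $ 0 = 0" "G $ 0 = 0" "GI $ 0 = 0" "FI $ 0 = 0"
    and F1: "F $ 1 = -1" and not_involution: "F oo F \<noteq> fps_X"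
    and G_inv: "GI oo G = fps_X" "G oo GI = fps_X"
    and F_inv: "FI oo F = fps_X" "F oo FI = fps_X"
    and conj: "GI oo (F oo F) oo G = FI oo FI"
  shows "GI oo F oo G = FI"
proof -
  define B where "B = GI oo F oo G"
  have BB: "B oo B = FI oo FI"
    unfolding B_def conj[symmetric]
    using zero by (simp add: fps_compose_assoc fps_compose_cancel_right[OF G_inv(2) zero(2,3)])
  have "(F oo F) oo (FI oo FI) = fps_X"
    using zero F_inv(2)
    by (simp add: fps_compose_assoc fps_compose_cancel_right[OF F_inv(2) zero(1,4)])
  moreover have "(F oo F) oo (FI oo FI) = F oo F" if "B oo B = fps_X"
    using that by (simp add: BB[symmetric])
  ultimately have "B oo B \<noteq> fps_X"
    using not_involution by auto
  have "GI $ 1 * G $ 1 = 1" by (rule fps_compose_eq_X_nth_1[OF G_inv(1) zero(2)])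
  then have B1: "B $ 1 = -1"
    using F1 fps_compose_nth_1[OF zero(2), of "GI oo F"] fps_compose_nth_1[OF zero(1), of GI]
    by (simp add: B_def algebra_simps)
  have "FI $ 1 * F $ 1 = 1" by (rule fps_compose_eq_X_nth_1[OF F_inv(1) zero(1)])
  then have FI1: "FI $ 1 = -1" using F1 by (metis minus_minus mult_minus1_right)
  show ?thesis
    unfolding B_def[symmetric]
    using zero by (intro fps_compose_square_root_unique[OF _ _ B1 FI1 BB \<open>B oo B \<noteq> fps_X\<close>])
      (simp_all add: B_def)
qed

lemma inG_has_fps_expansion: "inG f \<Longrightarrow> f has_fps_expansion fps_expansion f 0"
  by (simp add: inG_def analytic_at_imp_has_fps_expansion_0)

lemma inG_fps_expansion_nth:
  assumes "inG f"
  shows "fps_expansion f 0 $ 0 = 0" "fps_expansion f 0 $ 1 = deriv f 0"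
  using fps_nth_fps_expansion[OF inG_has_fps_expansion[OF assms]] assms by (auto simp: inG_def)

lemma fps_expansion_comp:
  assumes "inG f" "inG g"
  shows "fps_expansion (f \<circ> g) 0 = fps_expansion f 0 oo fps_expansion g 0"
  by (intro fps_expansion_eqI has_fps_expansion_compose inG_has_fps_expansion
      inG_fps_expansion_nth assms)

lemma inG_comp:
  assumes f: "inG f" and g: "inG g"
  shows "inG (f \<circ> g)"
proof -
  have "(f \<circ> g) has_fps_expansion (fps_expansion f 0 oo fps_expansion g 0)"
    using assms by (intro has_fps_expansion_compose inG_has_fps_expansion inG_fps_expansion_nth)
  then have "deriv (f \<circ> g) 0 = (fps_expansion f 0 oo fps_expansion g 0) $ 1"
    by (simp add: fps_nth_fps_expansion)
  also have "\<dots> = deriv f 0 * deriv g 0"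
    using fps_compose_nth_1[OF inG_fps_expansion_nth(1)[OF g]] inG_fps_expansion_nth(2) assms by simp
  finally show ?thesis
    using assms by (auto simp: inG_def intro: analytic_on_compose_gen)
qed

lemma inG_id: "inG id"
  by (simp add: inG_def analytic_on_id)

lemma fps_expansion_id: "fps_expansion id 0 = fps_X"
  unfolding id_def by (intro fps_expansion_eqI has_fps_expansion_fps_X)

lemma germ_eq_iff_fps_expansion_eq:
  assumes "f analytic_on {0}" "g analytic_on {0}"
  shows "germ_eq f g \<longleftrightarrow> fps_expansion f 0 = fps_expansion g 0"
proof
  assume "fps_expansion f 0 = fps_expansion g 0"
  then have "f has_fps_expansion fps_expansion g 0" "g has_fps_expansion fps_expansion g 0"
    using assms by (metis analytic_at_imp_has_fps_expansion_0)+
  then show "germ_eq f g"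
    unfolding has_fps_expansion_def germ_eq_def by (auto elim: eventually_elim2)
qed (simp add: germ_eq_def fps_expansion_cong)

lemma inG_imp_analytic: "inG f \<Longrightarrow> f analytic_on {0}"
  by (simp add: inG_def)

lemma germ_inv_iff_fps_expansion:
  assumes f: "inG f"
  shows "germ_inv f h \<longleftrightarrow> inG h \<and> fps_expansion h 0 oo fps_expansion f 0 = fps_X
           \<and> fps_expansion f 0 oo fps_expansion h 0 = fps_X"
  using f inG_comp[of h f] inG_comp[of f h] inG_id
  by (auto simp: germ_inv_def germ_eq_iff_fps_expansion_eq[OF inG_imp_analytic inG_imp_analytic]
      fps_expansion_comp fps_expansion_id)

lemma Rf_iff_fps_expansion:
  assumes f: "inG f"
  shows "g \<in> Rf f \<longleftrightarrow> inG g \<and> (\<exists>gi fi. germ_inv g gi \<and> germ_inv f fi \<and>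
           fps_expansion gi 0 oo fps_expansion f 0 oo fps_expansion g 0 = fps_expansion fi 0)"
proof -
  have "germ_eq (gi \<circ> f \<circ> g) fi \<longleftrightarrow>
      fps_expansion gi 0 oo fps_expansion f 0 oo fps_expansion g 0 = fps_expansion fi 0"
    if "inG g" "germ_inv g gi" "germ_inv f fi" for gi fi
    using that f by (simp add: germ_inv_def inG_comp fps_expansion_comp
        germ_eq_iff_fps_expansion_eq[OF inG_imp_analytic inG_imp_analytic])
  then show ?thesis by (auto simp: Rf_def)
qed

lemma Rf_subset_Rf_comp_self:
  assumes f: "inG f"
  shows "Rf f \<subseteq> Rf (f \<circ> f)"
proof
  fix g assume "g \<in> Rf f"
  then obtain gi fi where g: "inG g" and gi: "germ_inv g gi" and fi: "germ_inv f fi"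
    and conj: "fps_expansion gi 0 oo fps_expansion f 0 oo fps_expansion g 0 = fps_expansion fi 0"
    by (auto simp: Rf_iff_fps_expansion[OF f])
  define F G GI FI
    where "F = fps_expansion f 0" and "G = fps_expansion g 0"
      and "GI = fps_expansion gi 0" and "FI = fps_expansion fi 0"
  have G: "inG gi" "inG fi"
    and inv: "GI oo G = fps_X" "G oo GI = fps_X" "FI oo F = fps_X" "F oo FI = fps_X"
    using gi fi by (simp_all add: germ_inv_iff_fps_expansion f g F_def G_def GI_def FI_def)
  have zero: "F $ 0 = 0" "G $ 0 = 0" "GI $ 0 = 0" "FI $ 0 = 0"
    using f g G by (simp_all add: inG_fps_expansion_nth F_def G_def GI_def FI_def)
  note cancel = fps_compose_cancel_right[OF inv(2) zero(2,3)]
    fps_compose_cancel_right[OF inv(3) zero(4,1)] fps_compose_cancel_right[OF inv(4) zero(1,4)]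
  have "germ_inv (f \<circ> f) (fi \<circ> fi)"
    using f G inv zero by (simp add: germ_inv_iff_fps_expansion inG_comp fps_expansion_comp
        fps_compose_assoc cancel flip: F_def FI_def)
  moreover have "GI oo (F oo F) oo G = FI oo FI"
    unfolding conj[folded F_def G_def GI_def FI_def, symmetric]
    using zero by (simp add: fps_compose_assoc cancel)
  ultimately show "g \<in> Rf (f \<circ> f)"
    unfolding Rf_iff_fps_expansion[OF inG_comp[OF f f]] using f g gi G
    by (intro conjI exI[of _ gi] exI[of _ "fi \<circ> fi"])
      (simp_all add: fps_expansion_comp F_def G_def GI_def FI_def)
qed

lemma Rf_comp_self_subset_Rf:
  assumes f: "inG f" and f1: "deriv f 0 = -1" and not_involution: "\<not> germ_eq (f \<circ> f) id"
  shows "Rf (f \<circ> f) \<subseteq> Rf f"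
proof
  fix g assume "g \<in> Rf (f \<circ> f)"
  then obtain gi ffi where g: "inG g" and gi: "germ_inv g gi" and ffi: "germ_inv (f \<circ> f) ffi"
    and conj: "fps_expansion gi 0 oo (fps_expansion f 0 oo fps_expansion f 0) oo fps_expansion g 0
                 = fps_expansion ffi 0"
    by (auto simp: Rf_iff_fps_expansion inG_comp[OF f f] fps_expansion_comp[OF f f])
  define fi where "fi = ffi \<circ> f"
  define F G GI FFI FI
    where "F = fps_expansion f 0" and "G = fps_expansion g 0" and "GI = fps_expansion gi 0"
      and "FFI = fps_expansion ffi 0" and "FI = fps_expansion fi 0"
  have G: "inG gi" "inG ffi"
    and G_inv: "GI oo G = fps_X" "G oo GI = fps_X"
    and FF_inv: "FFI oo (F oo F) = fps_X" "(F oo F) oo FFI = fps_X"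
    using gi ffi by (simp_all add: germ_inv_iff_fps_expansion f g inG_comp fps_expansion_comp
        F_def G_def GI_def FFI_def)
  have zero: "F $ 0 = 0" "G $ 0 = 0" "GI $ 0 = 0" "FFI $ 0 = 0"
    using f g G by (simp_all add: inG_fps_expansion_nth F_def G_def GI_def FFI_def)
  have FI: "FI = FFI oo F" using f G by (simp add: FI_def fi_def fps_expansion_comp F_def FFI_def)
  have FI_left: "FI oo F = fps_X" using FF_inv(1) zero by (simp add: FI fps_compose_assoc)
  have FI_right: "FI = F oo FFI"
    using FF_inv(2) zero by (intro fps_compose_left_inverse_eq_right_inverse[OF FI_left])
      (simp_all add: FI fps_compose_assoc)
  have F_inv: "FI oo F = fps_X" "F oo FI = fps_X"
    using FI_left FF_inv(2) zero by (simp_all add: FI_right fps_compose_assoc)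
  have FI0: "FI $ 0 = 0" using zero by (simp add: FI)
  have "FI oo FI = FFI"
    using FI_left zero by (subst (2) FI_right) (simp add: fps_compose_assoc)
  then have conj': "GI oo (F oo F) oo G = FI oo FI"
    using conj by (simp add: F_def G_def GI_def FFI_def)
  have not_inv: "F oo F \<noteq> fps_X"
    using not_involution f inG_id
    by (simp add: germ_eq_iff_fps_expansion_eq[OF inG_imp_analytic inG_imp_analytic]
        inG_comp fps_expansion_comp fps_expansion_id F_def)
  have F1: "F $ 1 = -1" using inG_fps_expansion_nth(2)[OF f] f1 by (simp add: F_def)
  have "GI oo F oo G = FI"
    by (rule fps_compose_conjugate_inverse_of_square[OF zero(1-3) FI0 F1 not_inv G_inv F_inv conj'])
  moreover have "germ_inv f fi"
    using f F_inv inG_comp[OF G(2) f]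
    by (simp add: germ_inv_iff_fps_expansion flip: F_def FI_def fi_def)
  ultimately show "g \<in> Rf f"
    unfolding Rf_iff_fps_expansion[OF f] using g gi
    by (intro conjI exI[of _ gi] exI[of _ fi]) (simp_all add: F_def G_def GI_def FI_def)
qed

lemma involution_in_RG:
  assumes "inG f" and "germ_eq (f \<circ> f) id"
  shows "f \<in> RG"
proof -
  have "germ_inv id id" "germ_inv f f"
    using assms inG_id by (simp_all add: germ_inv_def germ_eq_def)
  then have "id \<in> Rf f"
    using inG_id unfolding Rf_def
    by (intro CollectI conjI exI[of _ id] exI[of _ f]) (simp_all add: germ_eq_def)
  then show ?thesis using assms(1) by (auto simp: RG_def)
qed

theorem corollary4p1:
  fixes f :: "complex \<Rightarrow> complex"
  assumes "inG f" and "deriv f 0 = -1"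
  shows "(germ_eq (f \<circ> f) id \<or> Rf f = Rf (f \<circ> f)) \<and> (f \<in> RG \<longleftrightarrow> f \<circ> f \<in> RG)"
proof (cases "germ_eq (f \<circ> f) id")
  case True
  then have "germ_eq ((f \<circ> f) \<circ> (f \<circ> f)) id"
    by (auto simp: germ_eq_def elim: eventually_mono)
  then show ?thesis
    using True assms(1) by (simp add: involution_in_RG inG_comp)
next
  case False
  then have "Rf f = Rf (f \<circ> f)"
    using Rf_subset_Rf_comp_self Rf_comp_self_subset_Rf assms by blast
  then show ?thesis
    using assms(1) by (auto simp: RG_def inG_comp)
qed

end
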